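(* There is an absolute constant $\mathfrak{M}>0$ such that for all $\alpha>-1$, $\beta>0$, $\eta>0$, every bounded continuous $\Phi:[0,\infty)\to\mathbb{R}$ and every $x\in[0,\infty)$, $$|\mathcal{R}_{\eta}^{(\alpha,\beta)}(\Phi;x)-\Phi(x)|\le \mathfrak{M}\,\omega_2\!\left(\Phi,\sqrt{\delta/2}\right)+\omega\!\left(\Phi,\frac{1+\alpha}{\eta}\right),\qquad \delta=\mu_{\eta,2}(x)+\left(\frac{1+\alpha}{\eta}\right)^2,$$ where $\mu_{\eta,2}(x)=\frac{x(3\beta+1)}{\beta\eta}+\frac{\alpha^2\beta+4\alpha\beta+3\beta+\alpha+1}{\beta\eta^2}$.
   Context: The generalized Laguerre polynomials are $\mathcal{L}_k^{(\alpha)}(t)=\sum_{i=0}^{k}\frac{(-1)^i}{i!}\binom{k+\alpha}{k-i}t^i$. Put $p_{\eta,k}(x)=e^{-\eta x/2}2^{-\alpha-1}2^{-k}\mathcal{L}_k^{(\alpha)}(-\eta x/2)$ and, for $k\ge1$, $z>0$, $\mathcal{I}_{k,\eta}^{\beta}(z)=\frac{\eta\beta e^{-\eta\beta z}(\eta\beta z)^{k\beta-1}}{\Gamma(k\beta)}$. The operator is $\mathcal{R}_{\eta}^{(\alpha,\beta)}(\Phi;x)=p_{\eta,0}(x)\Phi(0)+\sum_{k=1}^{\infty}p_{\eta,k}(x)\int_0^\infty\mathcal{I}_{k,\eta}^{\beta}(z)\Phi(z)\,dz$. The modulus of continuity is $\omega(\Phi,t)=\sup\{|\Phi(z)-\Phi(y)|: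 y,z\ge0,\ |z-y|\le t\}$ and the second-order modulus of smoothness is $\omega_2(\Phi,t)=\sup_{0<\epsilon\le t}\sup_{y\ge0}|\Phi(y+2\epsilon)-2\Phi(y+\epsilon)+\Phi(y)|$. *)

theory Defs
  imports "HOL-Analysis.Analysis"
begin

definition laguerre :: "real \<Rightarrow> nat \<Rightarrow> real \<Rightarrow> real" where
  "laguerre \<alpha> k t = (\<Sum>i=0..k. (-1)^i / fact i * ((real k + \<alpha>) gchoose (k - i)) * t^i)"

definition p_basis :: "real \<Rightarrow> real \<Rightarrow> nat \<Rightarrow> real \<Rightarrow> real" where
  "p_basis \<alpha> \<eta> k x = exp (-\<eta> * x / 2) * 2 powr (-\<alpha> - 1) * 2 powr (- real k)
      * laguerre \<alpha> k (-\<eta> * x / 2)"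

definition I_kernel :: "real \<Rightarrow> real \<Rightarrow> nat \<Rightarrow> real \<Rightarrow> real" where
  "I_kernel \<beta> \<eta> k z = \<eta> * \<beta> * exp (-\<eta> * \<beta> * z) * (\<eta> * \<beta> * z) powr (real k * \<beta> - 1)
      / Gamma (real k * \<beta>)"

definition R_op :: "real \<Rightarrow> real \<Rightarrow> real \<Rightarrow> (real \<Rightarrow> real) \<Rightarrow> real \<Rightarrow> real" where
  "R_op \<alpha> \<beta> \<eta> \<Phi> x = p_basis \<alpha> \<eta> 0 x * \<Phi> 0
     + (\<Sum>k. p_basis \<alpha> \<eta> (Suc k) x * integral {0<..} (\<lambda>z. I_kernel \<beta> \<eta> (Suc k) z * \<Phi> z))"

definition modcont :: "(real \<Rightarrow> real) \<Rightarrow> real \<Rightarrow> real" where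
  "modcont \<Phi> t = Sup {\<bar>\<Phi> z - \<Phi> y\<bar> | z y. z \<ge> 0 \<and> y \<ge> 0 \<and> \<bar>z - y\<bar> \<le> t}"

definition modsmooth2 :: "(real \<Rightarrow> real) \<Rightarrow> real \<Rightarrow> real" where
  "modsmooth2 \<Phi> t = Sup {\<bar>\<Phi> (y + 2*\<epsilon>) - 2 * \<Phi> (y + \<epsilon>) + \<Phi> y\<bar> | \<epsilon> y. 0 < \<epsilon> \<and> \<epsilon> \<le> t \<and> y \<ge> 0}"

definition mu2 :: "real \<Rightarrow> real \<Rightarrow> real \<Rightarrow> real \<Rightarrow> real" where
  "mu2 \<alpha> \<beta> \<eta> x = x * (3*\<beta> + 1) / (\<beta> * \<eta>)
     + (\<alpha>^2 * \<beta> + 4*\<alpha>*\<beta> + 3*\<beta> + \<alpha> + 1) / (\<beta> * \<eta>^2)"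

end

theory Submission
  imports Defs
begin

text \<open>The weights \<open>p_basis \<alpha> \<eta> k x\<close> form a probability distribution in \<open>k\<close>, and the \<open>k\<close>-th
  kernel is a Gamma density with mean \<open>k/\<eta>\<close>. Hence \<open>R_op\<close> is a positive operator that
  reproduces constants, maps \<open>z - x\<close> to \<open>c = (1 + \<alpha>)/\<eta>\<close> and \<open>(z - x)\<^sup>2\<close> to \<open>mu2\<close> at the
  point \<open>x\<close>. So if \<open>\<Phi>\<close> lies within \<open>W + L (z - x)\<^sup>2\<close> of an affine function \<open>A\<close>, then
  \<open>R_op \<Phi> x\<close> lies within \<open>W + L mu2\<close> of \<open>A (x + c)\<close>, and so does \<open>\<Phi> (x + c)\<close> up to
  \<open>W + L c\<^sup>2\<close>. A combination \<open>g\<close> of iterated Steklov means with steps \<open>h/2\<close> and \<open>h\<close> is within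
  \<open>W = \<omega>\<^sub>2(\<Phi>, h)\<close> of \<open>\<Phi>\<close> and has \<open>|g''| \<le> 9 W / h\<^sup>2\<close>; its tangent at \<open>x\<close> is such an \<open>A\<close>.
  With \<open>2 h\<^sup>2 = mu2 + c\<^sup>2\<close> this gives the estimate with constant 11, the term
  \<open>|\<Phi> (x + c) - \<Phi> x| \<le> \<omega>(\<Phi>, c)\<close> accounting for the shift of the mean.\<close>

section \<open>Poisson and negative binomial moments\<close>

definition negbin_coeff :: "real \<Rightarrow> nat \<Rightarrow> real" where
  "negbin_coeff c j = (real j + c - 1) gchoose j"

lemma negbin_coeff_nonneg: "c > 0 \<Longrightarrow> negbin_coeff c j \<ge> 0"
  unfolding negbin_coeff_def gbinomial_pochhammer' by (simp add: pochhammer_pos less_imp_le)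

lemma Suc_times_negbin_coeff_Suc: "real (Suc j) * negbin_coeff c (Suc j) = c * negbin_coeff (c + 1) j"
proof -
  have "real (Suc j) * negbin_coeff c (Suc j) = real (Suc j) * ((real j + c) gchoose Suc j)"
    unfolding negbin_coeff_def by (simp add: algebra_simps)
  also have "\<dots> = (real j + c) * ((real j + c - 1) gchoose j)"
    by (rule gbinomial_absorption)
  also have "\<dots> = c * ((real j + c) gchoose j)"
    using gbinomial_absorb_comp[of "real j + c" j] by simp
  finally show ?thesis unfolding negbin_coeff_def by (simp add: algebra_simps)
qed

lemma negbin_coeff_sums: "(\<lambda>j. negbin_coeff c j * (1/2)^j) sums 2 powr c"
proof -
  have "(\<lambda>j. ((-c) gchoose j) * (-1/2)^j) sums (1 + (-1/2)) powr (-c)"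
    by (rule gen_binomial_real) simp
  moreover have "((-c) gchoose j) * (-1/2)^j = negbin_coeff c j * (1/2)^j" for j
  proof -
    have "(-c) gchoose j = (-1)^j * negbin_coeff c j"
      unfolding negbin_coeff_def by (subst gbinomial_negated_upper) (simp add: algebra_simps)
    moreover have "(-1/2::real)^j = (-1)^j * (1/2)^j"
      by (simp add: power_minus')
    ultimately show ?thesis by (simp add: power_mult_distrib[symmetric])
  qed
  moreover have "(1 + (-1/2::real)) powr (-c) = 2 powr c"
    by (simp add: powr_minus_divide powr_divide)
  ultimately show ?thesis by simp
qed

lemma negbin_coeff_mean_sums: "(\<lambda>j. real j * negbin_coeff c j * (1/2)^j) sums (c * 2 powr c)"
proof -
  have "(\<lambda>j. c/2 * (negbin_coeff (c + 1) j * (1/2)^j)) sums (c/2 * 2 powr (c + 1))"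
    by (intro sums_mult negbin_coeff_sums)
  moreover have "c/2 * (negbin_coeff (c + 1) j * (1/2)^j) = real (Suc j) * negbin_coeff c (Suc j) * (1/2)^(Suc j)" for j
    using Suc_times_negbin_coeff_Suc[of j c] by simp
  moreover have "c/2 * 2 powr (c + 1) = c * 2 powr c"
    by (simp add: powr_add)
  ultimately have "(\<lambda>j. real (Suc j) * negbin_coeff c (Suc j) * (1/2)^(Suc j)) sums (c * 2 powr c)"
    by (metis (no_types, lifting) sums_cong)
  thus ?thesis by (subst (asm) sums_Suc_iff) simp
qed

lemma negbin_coeff_second_moment_sums:
  "(\<lambda>j. (real j)^2 * negbin_coeff c j * (1/2)^j) sums (c * (c + 2) * 2 powr c)"
proof -
  have "(\<lambda>j. c/2 * (real j * negbin_coeff (c + 1) j * (1/2)^j) + c/2 * (negbin_coeff (c + 1) j * (1/2)^j))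
      sums (c/2 * ((c + 1) * 2 powr (c + 1)) + c/2 * 2 powr (c + 1))"
    by (intro sums_add sums_mult negbin_coeff_sums negbin_coeff_mean_sums)
  moreover have "c/2 * (real j * negbin_coeff (c + 1) j * (1/2)^j) + c/2 * (negbin_coeff (c + 1) j * (1/2)^j)
      = (real (Suc j))^2 * negbin_coeff c (Suc j) * (1/2)^(Suc j)" for j
  proof -
    have "(real (Suc j))^2 * negbin_coeff c (Suc j) = real (Suc j) * (c * negbin_coeff (c + 1) j)"
      by (simp only: power2_eq_square mult.assoc Suc_times_negbin_coeff_Suc)
    thus ?thesis by (simp add: algebra_simps)
  qed
  moreover have "c/2 * ((c + 1) * 2 powr (c + 1)) + c/2 * 2 powr (c + 1) = c * (c + 2) * 2 powr c"
    by (simp add: powr_add algebra_simps)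
  ultimately have "(\<lambda>j. (real (Suc j))^2 * negbin_coeff c (Suc j) * (1/2)^(Suc j)) sums (c * (c + 2) * 2 powr c)"
    by (metis (no_types, lifting) sums_cong)
  thus ?thesis by (subst (asm) sums_Suc_iff) simp
qed

lemma quadratic_moment_sums:
  fixes p :: "nat \<Rightarrow> real"
  assumes "p sums m0" "(\<lambda>k. p k * real k) sums m1" "(\<lambda>k. p k * (real k)^2) sums m2"
  shows "(\<lambda>k. p k * (A + B * (t + real k) + C * (t + real k)^2))
           sums (A * m0 + B * (t * m0 + m1) + C * (t^2 * m0 + 2 * t * m1 + m2))"
proof -
  have "(\<lambda>k. (A + B * t + C * t^2) * p k + (B + 2 * C * t) * (p k * real k) + C * (p k * (real k)^2))
      sums ((A + B * t + C * t^2) * m0 + (B + 2 * C * t) * m1 + C * m2)"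
    by (intro sums_add sums_mult assms)
  thus ?thesis by (simp add: power2_eq_square algebra_simps)
qed

definition poisson_weight :: "real \<Rightarrow> nat \<Rightarrow> real" where
  "poisson_weight s i = exp (-s) * s^i / fact i"

definition negbin_weight :: "real \<Rightarrow> nat \<Rightarrow> real" where
  "negbin_weight c j = 2 powr (-c) * negbin_coeff c j * (1/2)^j"

lemma poisson_weight_nonneg: "s \<ge> 0 \<Longrightarrow> poisson_weight s i \<ge> 0"
  unfolding poisson_weight_def by simp

lemma negbin_weight_nonneg: "c > 0 \<Longrightarrow> negbin_weight c j \<ge> 0"
  unfolding negbin_weight_def by (simp add: negbin_coeff_nonneg)

lemma Suc_times_poisson_weight_Suc: "real (Suc i) * poisson_weight s (Suc i) = s * poisson_weight s i"
proof -
  have "(fact (Suc i) :: real) = real (Suc i) * fact i"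
    by simp
  thus ?thesis
    unfolding poisson_weight_def by (simp del: fact_Suc of_nat_Suc)
qed

lemma poisson_weight_sums: "poisson_weight s sums 1"
proof -
  have "(\<lambda>i. s^i / fact i) sums exp s"
    using exp_converges[of s] by (simp add: divide_inverse mult.commute)
  hence "(\<lambda>i. exp (-s) * (s^i / fact i)) sums (exp (-s) * exp s)"
    by (rule sums_mult)
  thus ?thesis by (simp add: poisson_weight_def[abs_def] exp_minus field_simps)
qed

lemma poisson_weight_mean_sums: "(\<lambda>i. poisson_weight s i * real i) sums s"
proof -
  have "(\<lambda>i. s * poisson_weight s i) sums (s * 1)"
    by (intro sums_mult poisson_weight_sums)
  hence "(\<lambda>i. poisson_weight s (Suc i) * real (Suc i)) sums s"
    by (simp add: Suc_times_poisson_weight_Suc[symmetric] mult.commute)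
  thus ?thesis by (subst (asm) sums_Suc_iff) simp
qed

lemma poisson_weight_second_moment_sums: "(\<lambda>i. poisson_weight s i * (real i)^2) sums (s^2 + s)"
proof -
  have "(\<lambda>i. s * (poisson_weight s i * real i) + s * poisson_weight s i) sums (s * s + s * 1)"
    by (intro sums_add sums_mult poisson_weight_sums poisson_weight_mean_sums)
  moreover have "s * (poisson_weight s i * real i) + s * poisson_weight s i
      = poisson_weight s (Suc i) * (real (Suc i))^2" for i
  proof -
    have "poisson_weight s (Suc i) * (real (Suc i))^2
        = real (Suc i) * (real (Suc i) * poisson_weight s (Suc i))"
      by (simp only: power2_eq_square ac_simps)
    also have "\<dots> = (real i + 1) * (s * poisson_weight s i)"
      by (simp only: Suc_times_poisson_weight_Suc) simp
    finally show ?thesis by (simp add: algebra_simps)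
  qed
  ultimately have "(\<lambda>i. poisson_weight s (Suc i) * (real (Suc i))^2) sums (s^2 + s)"
    by (simp add: power2_eq_square)
  thus ?thesis by (subst (asm) sums_Suc_iff) simp
qed

lemma negbin_weight_moment_sums:
  shows "negbin_weight c sums 1"
    and "(\<lambda>j. negbin_weight c j * real j) sums c"
    and "(\<lambda>j. negbin_weight c j * (real j)^2) sums (c * (c + 2))"
proof -
  have scale: "2 powr c * 2 powr (-c) = 1" "2 powr (-c) * 2 powr c = 1"
    by (simp_all add: powr_minus)
  show "negbin_weight c sums 1"
    using sums_mult[OF negbin_coeff_sums, of "2 powr (-c)" c]
    by (simp add: negbin_weight_def[abs_def] mult.assoc scale)
  show "(\<lambda>j. negbin_weight c j * real j) sums c"
    using sums_mult[OF negbin_coeff_mean_sums, of "2 powr (-c)" c]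
    by (simp add: negbin_weight_def algebra_simps scale)
  show "(\<lambda>j. negbin_weight c j * (real j)^2) sums (c * (c + 2))"
    using sums_mult[OF negbin_coeff_second_moment_sums, of "2 powr (-c)" c]
    by (simp add: negbin_weight_def algebra_simps scale)
qed

lemma convolution_sums_nonneg:
  fixes w f :: "nat \<Rightarrow> real" and q :: "nat \<Rightarrow> nat \<Rightarrow> real"
  assumes nonneg: "\<And>i. w i \<ge> 0" "\<And>i j. q i j \<ge> 0" "\<And>k. f k \<ge> 0"
    and inner: "\<And>i. ((\<lambda>j. q i j * f (i + j)) has_sum G i) UNIV"
    and outer: "((\<lambda>i. w i * G i) has_sum V) UNIV"
  shows "(\<lambda>k. (\<Sum>i\<le>k. w i * q i (k - i)) * f k) sums V"
proof -
  define b where "b = (\<lambda>(i, j). w i * (q i j * f (i + j)))"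
  have rows: "((\<lambda>j. b (i, j)) has_sum w i * G i) UNIV" for i
    unfolding b_def using has_sum_cmult_right[OF inner[of i], of "w i"] by simp
  have "b summable_on UNIV \<times> UNIV"
    by (rule summable_on_SigmaI[OF rows has_sum_imp_summable[OF outer]])
       (use nonneg in \<open>auto simp: b_def\<close>)
  hence "(b has_sum V) (UNIV \<times> UNIV)"
    by (rule has_sum_SigmaI[OF rows outer])
  moreover have "bij_betw (\<lambda>(k::nat, i). (i, k - i)) (SIGMA k:UNIV. {..k}) (UNIV \<times> UNIV)"
    by (intro bij_betw_byWitness[where f' = "\<lambda>(i, j). (i + j, i)"]) auto
  ultimately have diagonals: "((\<lambda>(k, i). b (i, k - i)) has_sum V) (SIGMA k:UNIV. {..k})"
    by (subst (asm) has_sum_reindex_bij_betw[symmetric]) (simp_all add: case_prod_beta')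
  have "((\<lambda>i. b (i, k - i)) has_sum (\<Sum>i\<le>k. w i * q i (k - i)) * f k) {..k}" for k
    by (rule has_sum_finiteI) (simp_all add: b_def sum_distrib_right mult.assoc)
  hence "((\<lambda>k. (\<Sum>i\<le>k. w i * q i (k - i)) * f k) has_sum V) UNIV"
    by (intro has_sum_SigmaD[OF diagonals]) simp
  thus ?thesis by (rule has_sum_imp_sums)
qed

section \<open>The Laguerre weights\<close>

text \<open>The weight \<open>p_basis \<alpha> \<eta> k x\<close> is the law of \<open>I + J\<close>, where \<open>I\<close> is Poisson with mean
  \<open>s = \<eta> x / 2\<close> and, given \<open>I = i\<close>, \<open>J\<close> is negative binomial with parameters \<open>i + \<alpha> + 1\<close>
  and \<open>1/2\<close>.\<close>

definition laguerre_weight :: "real \<Rightarrow> real \<Rightarrow> nat \<Rightarrow> real" where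
  "laguerre_weight \<alpha> s k = (\<Sum>i\<le>k. poisson_weight s i * negbin_weight (real i + \<alpha> + 1) (k - i))"

lemma laguerre_weight_nonneg: "\<alpha> > -1 \<Longrightarrow> s \<ge> 0 \<Longrightarrow> laguerre_weight \<alpha> s k \<ge> 0"
  unfolding laguerre_weight_def
  by (intro sum_nonneg mult_nonneg_nonneg poisson_weight_nonneg negbin_weight_nonneg) auto

lemma laguerre_weight_quadratic_sums:
  assumes \<alpha>: "\<alpha> > -1" and s: "s \<ge> 0" and coeffs: "A \<ge> 0" "B \<ge> 0" "C \<ge> 0"
  shows "(\<lambda>k. laguerre_weight \<alpha> s k * (A + B * real k + C * (real k)^2))
     sums (A + B * (\<alpha> + 1 + 2 * s) + C * (4 * s^2 + s * (4 * \<alpha> + 10) + (\<alpha> + 1) * (\<alpha> + 3)))"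
  unfolding laguerre_weight_def
proof (rule convolution_sums_nonneg)
  define c where "c = (\<lambda>i::nat. real i + \<alpha> + 1)"
  have c: "c i > 0" for i
    using \<alpha> by (simp add: c_def add_pos_nonneg)
  define G where "G = (\<lambda>i. A + B * (real i + c i) + C * ((real i)^2 + 2 * real i * c i + c i * (c i + 2)))"
  show "poisson_weight s i \<ge> 0" "negbin_weight (real i + \<alpha> + 1) j \<ge> 0"
      "A + B * real k + C * (real k)^2 \<ge> 0" for i j k
    using poisson_weight_nonneg[OF s] negbin_weight_nonneg[OF c[unfolded c_def]] coeffs
    by simp_all
  show "((\<lambda>j. negbin_weight (real i + \<alpha> + 1) j * (A + B * real (i + j) + C * (real (i + j))^2))
          has_sum G i) UNIV" for i
  proof (rule sums_nonneg_imp_has_sum)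
    have "(\<lambda>j. negbin_weight (c i) j * (A + B * (real i + real j) + C * (real i + real j)^2))
        sums (A * 1 + B * (real i * 1 + c i) + C * ((real i)^2 * 1 + 2 * real i * c i + c i * (c i + 2)))"
      by (rule quadratic_moment_sums[OF negbin_weight_moment_sums])
    thus "(\<lambda>j. negbin_weight (real i + \<alpha> + 1) j * (A + B * real (i + j) + C * (real (i + j))^2))
        sums G i"
      by (simp add: G_def c_def)
    show "negbin_weight (real i + \<alpha> + 1) j * (A + B * real (i + j) + C * (real (i + j))^2) \<ge> 0" for j
      using negbin_weight_nonneg[OF c[unfolded c_def]] coeffs by simp
  qed
  show "((\<lambda>i. poisson_weight s i * G i) has_sum
      (A + B * (\<alpha> + 1 + 2 * s) + C * (4 * s^2 + s * (4 * \<alpha> + 10) + (\<alpha> + 1) * (\<alpha> + 3)))) UNIV"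
  proof (rule sums_nonneg_imp_has_sum)
    define A' where "A' = A + B * (\<alpha> + 1) + C * (\<alpha> + 1) * (\<alpha> + 3)"
    define B' where "B' = 2 * B + C * (4 * \<alpha> + 6)"
    have "(\<lambda>i. poisson_weight s i * (A' + B' * (0 + real i) + 4 * C * (0 + real i)^2))
        sums (A' * 1 + B' * (0 * 1 + s) + 4 * C * (0^2 * 1 + 2 * 0 * s + (s^2 + s)))"
      by (rule quadratic_moment_sums[OF poisson_weight_sums poisson_weight_mean_sums
            poisson_weight_second_moment_sums])
    moreover have "A' + B' * (0 + real i) + 4 * C * (0 + real i)^2 = G i" for i
      by (simp add: A'_def B'_def G_def c_def algebra_simps power2_eq_square)
    moreover have "A' * 1 + B' * (0 * 1 + s) + 4 * C * (0^2 * 1 + 2 * 0 * s + (s^2 + s))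
        = A + B * (\<alpha> + 1 + 2 * s) + C * (4 * s^2 + s * (4 * \<alpha> + 10) + (\<alpha> + 1) * (\<alpha> + 3))"
      by (simp add: A'_def B'_def algebra_simps power2_eq_square)
    ultimately show "(\<lambda>i. poisson_weight s i * G i) sums
        (A + B * (\<alpha> + 1 + 2 * s) + C * (4 * s^2 + s * (4 * \<alpha> + 10) + (\<alpha> + 1) * (\<alpha> + 3)))"
      by simp
    show "poisson_weight s i * G i \<ge> 0" for i
      using poisson_weight_nonneg[OF s] c[of i] coeffs by (simp add: G_def)
  qed
qed

lemma p_basis_eq_laguerre_weight: "p_basis \<alpha> \<eta> k x = laguerre_weight \<alpha> (\<eta> * x / 2) k"
proof -
  define s where "s = \<eta> * x / 2"
  have term_eq: "exp (-s) * 2 powr (-\<alpha> - 1) * 2 powr (- real k)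
      * ((-1)^i / fact i * ((real k + \<alpha>) gchoose (k - i)) * (-s)^i)
     = poisson_weight s i * negbin_weight (real i + \<alpha> + 1) (k - i)" if "i \<le> k" for i
  proof -
    have signs: "(-1::real)^i * (-s)^i = s^i"
      by (simp add: power_minus')
    have binom: "negbin_coeff (real i + \<alpha> + 1) (k - i) = (real k + \<alpha>) gchoose (k - i)"
      unfolding negbin_coeff_def using that by (simp add: of_nat_diff)
    have "(1/2::real)^(k - i) = 2 powr (-(real (k - i)))"
      by (simp add: powr_minus powr_realpow power_one_over inverse_eq_divide)
    hence "2 powr (-(real i + \<alpha> + 1)) * (1/2::real)^(k - i)
        = 2 powr (-(real i + \<alpha> + 1) + -(real (k - i)))"
      by (simp only: powr_add)
    also have "-(real i + \<alpha> + 1) + -(real (k - i)) = (-\<alpha> - 1) + (- real k)"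
      using that by (simp add: of_nat_diff)
    finally have powers: "2 powr (-\<alpha> - 1) * 2 powr (- real k)
        = 2 powr (-(real i + \<alpha> + 1)) * (1/2::real)^(k - i)"
      by (simp only: powr_add)
    have "exp (-s) * 2 powr (-\<alpha> - 1) * 2 powr (- real k)
        * ((-1)^i / fact i * ((real k + \<alpha>) gchoose (k - i)) * (-s)^i)
      = exp (-s) * (2 powr (-\<alpha> - 1) * 2 powr (- real k)) * ((-1)^i * (-s)^i) / fact i
        * ((real k + \<alpha>) gchoose (k - i))"
      by (simp only: times_divide_eq_left times_divide_eq_right ac_simps)
    also have "\<dots> = poisson_weight s i * negbin_weight (real i + \<alpha> + 1) (k - i)"
      unfolding powers signs poisson_weight_def negbin_weight_def binom by (simp add: ac_simps)
    finally show ?thesis .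
  qed
  have "p_basis \<alpha> \<eta> k x = (\<Sum>i=0..k. exp (-s) * 2 powr (-\<alpha> - 1) * 2 powr (- real k)
      * ((-1)^i / fact i * ((real k + \<alpha>) gchoose (k - i)) * (-s)^i))"
    unfolding p_basis_def laguerre_def sum_distrib_left by (simp add: s_def)
  also have "\<dots> = laguerre_weight \<alpha> s k"
    unfolding laguerre_weight_def using term_eq by (simp add: atMost_atLeast0)
  finally show ?thesis unfolding s_def .
qed

lemma p_basis_nonneg: "\<alpha> > -1 \<Longrightarrow> \<eta> > 0 \<Longrightarrow> x \<ge> 0 \<Longrightarrow> p_basis \<alpha> \<eta> k x \<ge> 0"
  unfolding p_basis_eq_laguerre_weight by (rule laguerre_weight_nonneg) auto

lemma p_basis_moment_sums:
  assumes \<alpha>: "\<alpha> > -1" and \<beta>: "\<beta> > 0" and \<eta>: "\<eta> > 0" and x: "x \<ge> 0"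
  shows "(\<lambda>k. p_basis \<alpha> \<eta> k x) sums 1"
    and "(\<lambda>k. p_basis \<alpha> \<eta> k x * (real k / \<eta> - x)) sums ((1 + \<alpha>) / \<eta>)"
    and "(\<lambda>k. p_basis \<alpha> \<eta> k x * ((real k ^ 2 + real k / \<beta>) / \<eta>^2 - 2 * x * (real k / \<eta>) + x^2))
           sums mu2 \<alpha> \<beta> \<eta> x"
proof -
  define s where "s = \<eta> * x / 2"
  have s: "s \<ge> 0"
    using \<eta> x by (simp add: s_def)
  define P where "P = (\<lambda>k. p_basis \<alpha> \<eta> k x)"
  have P: "P = laguerre_weight \<alpha> s"
    by (simp add: P_def s_def p_basis_eq_laguerre_weight fun_eq_iff)
  have S0: "P sums 1"
    using laguerre_weight_quadratic_sums[OF \<alpha> s, of 1 0 0] by (simp add: P)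
  have S1: "(\<lambda>k. P k * real k) sums (\<alpha> + 1 + 2 * s)"
    using laguerre_weight_quadratic_sums[OF \<alpha> s, of 0 1 0] by (simp add: P)
  have S2: "(\<lambda>k. P k * (real k)^2) sums (4 * s^2 + s * (4 * \<alpha> + 10) + (\<alpha> + 1) * (\<alpha> + 3))"
    using laguerre_weight_quadratic_sums[OF \<alpha> s, of 0 0 1] by (simp add: P)
  note quadratic = quadratic_moment_sums[OF S0 S1 S2, where t = 0]
  show "(\<lambda>k. p_basis \<alpha> \<eta> k x) sums 1"
    using S0 by (simp add: P_def)
  have "(\<lambda>k. P k * (- x + 1/\<eta> * (0 + real k) + 0 * (0 + real k)^2)) sums ((1 + \<alpha>) / \<eta>)"
    using quadratic[of "-x" "1/\<eta>" 0] \<eta> by (simp add: s_def field_simps)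
  thus "(\<lambda>k. p_basis \<alpha> \<eta> k x * (real k / \<eta> - x)) sums ((1 + \<alpha>) / \<eta>)"
    by (simp add: P_def)
  have "x^2 * 1 + (1/(\<beta> * \<eta>^2) - 2 * x / \<eta>) * (0 * 1 + (\<alpha> + 1 + 2 * s))
      + 1/\<eta>^2 * (0^2 * 1 + 2 * 0 * (\<alpha> + 1 + 2 * s) + (4 * s^2 + s * (4 * \<alpha> + 10) + (\<alpha> + 1) * (\<alpha> + 3)))
      = mu2 \<alpha> \<beta> \<eta> x"
    using \<beta> \<eta> by (simp add: s_def mu2_def field_simps power2_eq_square)
  hence "(\<lambda>k. P k * (x^2 + (1/(\<beta> * \<eta>^2) - 2 * x / \<eta>) * (0 + real k) + 1/\<eta>^2 * (0 + real k)^2))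
      sums mu2 \<alpha> \<beta> \<eta> x"
    using quadratic[of "x^2" "1/(\<beta> * \<eta>^2) - 2 * x / \<eta>" "1/\<eta>^2"] by simp
  moreover have "P k * (x^2 + (1/(\<beta> * \<eta>^2) - 2 * x / \<eta>) * (0 + real k) + 1/\<eta>^2 * (0 + real k)^2)
      = p_basis \<alpha> \<eta> k x * ((real k ^ 2 + real k / \<beta>) / \<eta>^2 - 2 * x * (real k / \<eta>) + x^2)" for k
    using \<beta> \<eta> by (simp add: P_def field_simps power2_eq_square)
  ultimately show "(\<lambda>k. p_basis \<alpha> \<eta> k x * ((real k ^ 2 + real k / \<beta>) / \<eta>^2 - 2 * x * (real k / \<eta>) + x^2))
      sums mu2 \<alpha> \<beta> \<eta> x"
    by (metis (no_types, lifting) sums_cong)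
qed

section \<open>The Gamma kernels\<close>

lemma Gamma_has_integral_Ioi:
  assumes "\<nu> > (0::real)"
  shows "((\<lambda>t. t powr (\<nu> - 1) / exp t) has_integral Gamma \<nu>) {0<..}"
proof -
  have "((\<lambda>t. t powr (\<nu> - 1) / exp t) has_integral Gamma \<nu>) {0..}"
    by (rule Gamma_integral_real) fact
  hence "((\<lambda>t. if t \<in> {0<..} then t powr (\<nu> - 1) / exp t else 0) has_integral Gamma \<nu>) {0..}"
    by (rule has_integral_spike [of "{0}", rotated 2]) auto
  thus ?thesis
    by (subst (asm) has_integral_restrict) auto
qed

lemma I_kernel_power_has_integral:
  assumes \<beta>: "\<beta> > 0" and \<eta>: "\<eta> > 0" and k: "k > 0"
  shows "((\<lambda>z. I_kernel \<beta> \<eta> k z * z^m) has_integral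
           Gamma (real k * \<beta> + real m) / (Gamma (real k * \<beta>) * (\<eta> * \<beta>)^m)) {0<..}"
proof -
  define r where "r = \<eta> * \<beta>"
  define \<nu> where "\<nu> = real k * \<beta>"
  have r: "r > 0" and \<nu>: "\<nu> > 0"
    using \<beta> \<eta> k by (simp_all add: r_def \<nu>_def)
  define f where "f = (\<lambda>t::real. t powr (\<nu> + real m - 1) / exp t)"
  have f: "(f has_integral Gamma (\<nu> + real m)) {0<..}"
    unfolding f_def by (rule Gamma_has_integral_Ioi) (use \<nu> in simp)
  have "(\<lambda>z. r * z) ` {0<..} = {0<..}"
  proof (intro set_eqI iffI)
    fix y :: real assume "y \<in> {0<..}"
    thus "y \<in> (\<lambda>z. r * z) ` {0<..}"
      using r by (intro image_eqI[of _ _ "y / r"]) auto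
  qed (use r in auto)
  moreover have "f absolutely_integrable_on {0<..}"
    by (rule nonnegative_absolutely_integrable_1) (use f in \<open>auto simp: f_def has_integral_integrable\<close>)
  ultimately have "(\<lambda>z. \<bar>r\<bar> * f (r * z)) absolutely_integrable_on {0<..} \<and>
          integral {0<..} (\<lambda>z. \<bar>r\<bar> * f (r * z)) = Gamma (\<nu> + real m)"
  proof (subst has_absolute_integral_change_of_variables_1'[where g = "\<lambda>z. r * z" and g' = "\<lambda>_. r"])
    show "{(0::real)<..} \<in> sets lebesgue"
      by (simp add: sets_completionI_sets)
    show "((\<lambda>z. r * z) has_field_derivative r) (at x within {0<..})" for x
      by (auto intro!: derivative_eq_intros)
    show "inj_on ((*) r) {0<..}"
      using r by (auto simp: inj_on_def)
  qed (use f in \<open>simp_all add: integral_unique\<close>)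
  hence "((\<lambda>z. r * f (r * z)) has_integral Gamma (\<nu> + real m)) {0<..}"
    using r unfolding has_integral_integrable_integral absolutely_integrable_on_def by simp
  hence scaled: "((\<lambda>z. r * f (r * z) / (Gamma \<nu> * r^m)) has_integral
      Gamma (\<nu> + real m) / (Gamma \<nu> * r^m)) {0<..}"
    by (rule has_integral_divide)
  have pointwise: "I_kernel \<beta> \<eta> k z * z^m = r * f (r * z) / (Gamma \<nu> * r^m)" if "z > 0" for z
  proof -
    have "(r * z) powr (\<nu> + real m - 1) = (r * z) powr ((\<nu> - 1) + real m)"
      by (simp add: algebra_simps)
    also have "\<dots> = (r * z) powr (\<nu> - 1) * (r * z)^m"
      using r that by (simp add: powr_add powr_realpow)
    finally have "(r * z) powr (\<nu> + real m - 1) = (r * z) powr (\<nu> - 1) * (r * z)^m" .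
    thus ?thesis
      unfolding I_kernel_def f_def r_def[symmetric] \<nu>_def[symmetric]
      using r that by (simp add: field_simps exp_minus power_mult_distrib r_def)
  qed
  show ?thesis
    unfolding r_def[symmetric] \<nu>_def[symmetric]
    by (rule has_integral_eq[OF _ scaled]) (simp add: pointwise)
qed

lemma I_kernel_moments:
  assumes \<beta>: "\<beta> > 0" and \<eta>: "\<eta> > 0" and k: "k > 0"
  shows "(I_kernel \<beta> \<eta> k has_integral 1) {0<..}"
    and "((\<lambda>z. I_kernel \<beta> \<eta> k z * z) has_integral real k / \<eta>) {0<..}"
    and "((\<lambda>z. I_kernel \<beta> \<eta> k z * z^2) has_integral (real k ^ 2 + real k / \<beta>) / \<eta>^2) {0<..}"
proof -
  define \<nu> where "\<nu> = real k * \<beta>"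
  have \<nu>: "\<nu> > 0"
    using \<beta> k by (simp add: \<nu>_def)
  have Gamma1: "Gamma (\<nu> + 1) = \<nu> * Gamma \<nu>"
    using \<nu> by (intro Gamma_plus1) (auto dest: nonpos_Ints_nonpos)
  have "Gamma (\<nu> + 1 + 1) = (\<nu> + 1) * Gamma (\<nu> + 1)"
    using \<nu> by (intro Gamma_plus1) (auto dest: nonpos_Ints_nonpos)
  hence Gamma2: "Gamma (\<nu> + 2) = (\<nu> + 1) * \<nu> * Gamma \<nu>"
    by (simp add: Gamma1 add.assoc)
  have "Gamma \<nu> > 0"
    using \<nu> by simp
  note moment = I_kernel_power_has_integral[OF \<beta> \<eta> k, folded \<nu>_def]
  show "(I_kernel \<beta> \<eta> k has_integral 1) {0<..}"
    using moment[of 0] \<open>Gamma \<nu> > 0\<close> by simp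
  have "Gamma (\<nu> + real 1) / (Gamma \<nu> * (\<eta> * \<beta>)^1) = real k / \<eta>"
    using \<open>Gamma \<nu> > 0\<close> \<beta> \<eta> by (simp add: Gamma1) (simp add: \<nu>_def)
  thus "((\<lambda>z. I_kernel \<beta> \<eta> k z * z) has_integral real k / \<eta>) {0<..}"
    using moment[of 1] by simp
  have "Gamma (\<nu> + real 2) / (Gamma \<nu> * (\<eta> * \<beta>)^2) = (real k ^ 2 + real k / \<beta>) / \<eta>^2"
    using \<open>Gamma \<nu> > 0\<close> \<beta> \<eta> by (simp add: Gamma2) (simp add: \<nu>_def field_simps power2_eq_square)
  thus "((\<lambda>z. I_kernel \<beta> \<eta> k z * z^2) has_integral (real k ^ 2 + real k / \<beta>) / \<eta>^2) {0<..}"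
    using moment[of 2] by simp
qed

lemma I_kernel_nonneg: "\<beta> > 0 \<Longrightarrow> \<eta> > 0 \<Longrightarrow> k > 0 \<Longrightarrow> z > 0 \<Longrightarrow> I_kernel \<beta> \<eta> k z \<ge> 0"
  unfolding I_kernel_def by (intro divide_nonneg_nonneg mult_nonneg_nonneg) (auto intro: less_imp_le)

lemma continuous_on_I_kernel:
  assumes "\<beta> > 0" "\<eta> > 0" "k > 0"
  shows "continuous_on {0<..} (I_kernel \<beta> \<eta> k)"
proof -
  have "Gamma (real k * \<beta>) \<noteq> 0"
    using assms by (simp add: Gamma_real_pos less_imp_neq[symmetric])
  with assms show ?thesis
    unfolding I_kernel_def[abs_def] by (auto intro!: continuous_intros continuous_on_powr')
qed

section \<open>The operator on nearly affine functions\<close>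

text \<open>The \<open>k = 0\<close> term of \<open>R_op\<close> evaluates \<open>\<Phi>\<close> at \<open>0\<close>: a point mass whose moments
  agree with those of the Gamma kernels at \<open>k = 0\<close>.\<close>

definition kernel_avg :: "real \<Rightarrow> real \<Rightarrow> nat \<Rightarrow> (real \<Rightarrow> real) \<Rightarrow> real" where
  "kernel_avg \<beta> \<eta> k \<Phi> = (if k = 0 then \<Phi> 0 else integral {0<..} (\<lambda>z. I_kernel \<beta> \<eta> k z * \<Phi> z))"

lemma kernel_avg_affine_approx:
  assumes \<beta>: "\<beta> > 0" and \<eta>: "\<eta> > 0" and cont: "continuous_on {0..} \<Phi>"
    and approx: "\<And>z. z \<ge> 0 \<Longrightarrow> \<bar>\<Phi> z - (a + b * (z - x))\<bar> \<le> W + L * (z - x)^2"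
  shows "\<bar>kernel_avg \<beta> \<eta> k \<Phi> - (a + b * (real k / \<eta> - x))\<bar>
           \<le> W + L * ((real k ^ 2 + real k / \<beta>) / \<eta>^2 - 2 * x * (real k / \<eta>) + x^2)"
proof (cases "k = 0")
  case True
  thus ?thesis
    using approx[of 0] by (simp add: kernel_avg_def)
next
  case False
  hence k: "k > 0" by simp
  define I where "I = I_kernel \<beta> \<eta> k"
  define err where "err = (\<lambda>z. \<Phi> z - (a + b * (z - x)))"
  define M where "M = (real k ^ 2 + real k / \<beta>) / \<eta>^2 - 2 * x * (real k / \<eta>) + x^2"
  note moments = I_kernel_moments[OF \<beta> \<eta> k, folded I_def]
  have I_nonneg: "I z \<ge> 0" if "z \<in> {0<..}" for z
    using I_kernel_nonneg[OF \<beta> \<eta> k] that by (simp add: I_def)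
  have "((\<lambda>z. W * I z + L * (I z * z^2) - 2 * L * x * (I z * z) + L * x^2 * I z)
      has_integral W * 1 + L * ((real k ^ 2 + real k / \<beta>) / \<eta>^2) - 2 * L * x * (real k / \<eta>)
        + L * x^2 * 1) {0<..}"
    by (intro has_integral_add has_integral_diff has_integral_mult_right moments)
  hence dominant: "((\<lambda>z. I z * (W + L * (z - x)^2)) has_integral W + L * M) {0<..}"
    by (simp add: M_def power2_eq_square algebra_simps)
  have err_bound: "norm (I z * err z) \<le> I z * (W + L * (z - x)^2)" if "z \<in> {0<..}" for z
    using I_nonneg[OF that] approx[of z] that by (simp add: err_def abs_mult mult_left_mono)
  have "continuous_on {0<..} (\<lambda>z. I z * err z)"
    unfolding I_def err_def
    by (intro continuous_intros continuous_on_I_kernel[OF \<beta> \<eta> k] continuous_on_subset[OF cont]) auto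
  hence "(\<lambda>z. I z * err z) absolutely_integrable_on {0<..}"
    using dominant err_bound
    by (intro measurable_bounded_by_integrable_imp_absolutely_integrable
          [where g = "\<lambda>z. I z * (W + L * (z - x)^2)"])
       (auto simp: sets_completionI_sets continuous_imp_measurable_on_sets_lebesgue)
  hence err_int: "((\<lambda>z. I z * err z) has_integral integral {0<..} (\<lambda>z. I z * err z)) {0<..}"
    by (auto simp: absolutely_integrable_on_def intro!: has_integral_integral)
  have "((\<lambda>z. I z * err z + (a * I z + b * (I z * z) - b * x * I z))
      has_integral integral {0<..} (\<lambda>z. I z * err z) + (a * 1 + b * (real k / \<eta>) - b * x * 1)) {0<..}"
    by (intro has_integral_add has_integral_diff has_integral_mult_right err_int moments)
  hence "kernel_avg \<beta> \<eta> k \<Phi> = integral {0<..} (\<lambda>z. I z * err z) + (a + b * (real k / \<eta> - x))"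
    using k by (simp add: kernel_avg_def I_def[symmetric] err_def algebra_simps integral_unique)
  moreover have "norm (integral {0<..} (\<lambda>z. I z * err z)) \<le> integral {0<..} (\<lambda>z. I z * (W + L * (z - x)^2))"
    using err_int dominant err_bound by (intro integral_norm_bound_integral) auto
  ultimately show ?thesis
    using dominant by (simp add: M_def integral_unique)
qed

lemma R_op_affine_approx:
  assumes \<alpha>: "\<alpha> > -1" and \<beta>: "\<beta> > 0" and \<eta>: "\<eta> > 0" and x: "x \<ge> 0"
    and cont: "continuous_on {0..} \<Phi>"
    and approx: "\<And>z. z \<ge> 0 \<Longrightarrow> \<bar>\<Phi> z - (a + b * (z - x))\<bar> \<le> W + L * (z - x)^2"
  shows "\<bar>R_op \<alpha> \<beta> \<eta> \<Phi> x - (a + b * ((1 + \<alpha>) / \<eta>))\<bar> \<le> W + L * mu2 \<alpha> \<beta> \<eta> x"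
proof -
  define P where "P = (\<lambda>k. p_basis \<alpha> \<eta> k x)"
  define err where "err = (\<lambda>k. kernel_avg \<beta> \<eta> k \<Phi> - (a + b * (real k / \<eta> - x)))"
  define M where "M = (\<lambda>k. (real k ^ 2 + real k / \<beta>) / \<eta>^2 - 2 * x * (real k / \<eta>) + x^2)"
  note moments = p_basis_moment_sums[OF \<alpha> \<beta> \<eta> x]
  have total: "P sums 1"
    unfolding P_def by (rule moments(1))
  have mean: "(\<lambda>k. P k * (real k / \<eta> - x)) sums ((1 + \<alpha>) / \<eta>)"
    using moments(2) by (simp add: P_def)
  have second_moment: "(\<lambda>k. P k * M k) sums mu2 \<alpha> \<beta> \<eta> x"
    using moments(3) by (simp add: M_def P_def)
  have P_nonneg: "P k \<ge> 0" for k
    using p_basis_nonneg[OF \<alpha> \<eta> x] by (simp add: P_def)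
  have bound: "norm (P k * err k) \<le> W * P k + L * (P k * M k)" for k
  proof -
    have "norm (P k * err k) = P k * \<bar>err k\<bar>"
      using P_nonneg[of k] by (simp add: abs_mult)
    also have "\<dots> \<le> P k * (W + L * M k)"
      unfolding err_def M_def
      by (rule mult_left_mono[OF kernel_avg_affine_approx[OF \<beta> \<eta> cont approx] P_nonneg])
    finally show ?thesis
      by (simp add: algebra_simps)
  qed
  have bound_sums: "(\<lambda>k. W * P k + L * (P k * M k)) sums (W * 1 + L * mu2 \<alpha> \<beta> \<eta> x)"
    by (intro sums_add sums_mult total second_moment)
  have "summable (\<lambda>k. P k * err k)"
    using bound bound_sums by (intro summable_comparison_test[OF _ sums_summable]) auto
  hence "(\<lambda>k. P k * err k + (a * P k + b * (P k * (real k / \<eta> - x))))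
      sums ((\<Sum>k. P k * err k) + (a * 1 + b * ((1 + \<alpha>) / \<eta>)))"
    by (intro sums_add summable_sums sums_mult total mean)
  hence "(\<lambda>k. P k * kernel_avg \<beta> \<eta> k \<Phi>) sums ((\<Sum>k. P k * err k) + (a + b * ((1 + \<alpha>) / \<eta>)))"
    by (simp add: err_def algebra_simps)
  hence "(\<lambda>k. P (Suc k) * kernel_avg \<beta> \<eta> (Suc k) \<Phi>)
      sums ((\<Sum>k. P k * err k) + (a + b * ((1 + \<alpha>) / \<eta>)) - P 0 * kernel_avg \<beta> \<eta> 0 \<Phi>)"
    by (subst sums_Suc_iff) simp
  hence "R_op \<alpha> \<beta> \<eta> \<Phi> x = (\<Sum>k. P k * err k) + (a + b * ((1 + \<alpha>) / \<eta>))"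
    by (simp add: R_op_def P_def kernel_avg_def sums_iff)
  moreover have "norm (\<Sum>k. P k * err k) \<le> W * 1 + L * mu2 \<alpha> \<beta> \<eta> x"
    using norm_suminf_le[OF bound sums_summable[OF bound_sums]] bound_sums by (simp add: sums_iff)
  ultimately show ?thesis
    by simp
qed

section \<open>Smoothing by Steklov means\<close>

lemma taylor_second_order_bound:
  fixes g g' g'' :: "real \<Rightarrow> real"
  assumes "\<And>z. z \<ge> a \<Longrightarrow> (g has_real_derivative g' z) (at z)"
    and "\<And>z. z \<ge> a \<Longrightarrow> (g' has_real_derivative g'' z) (at z)"
    and "\<And>z. z \<ge> a \<Longrightarrow> \<bar>g'' z\<bar> \<le> L"
    and "y \<ge> a" "t \<ge> a"
  shows "\<bar>g t - g y - g' y * (t - y)\<bar> \<le> L / 2 * (t - y)^2"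
proof (cases "t = y")
  case False
  define diff where "diff = (\<lambda>m::nat. if m = 0 then g else if m = 1 then g' else g'')"
  have "diff 0 = g"
    by (simp add: diff_def)
  moreover have "\<forall>m z. m < 2 \<and> a \<le> z \<and> z \<le> max y t \<longrightarrow> (diff m has_real_derivative diff (Suc m) z) (at z)"
    using assms(1,2) by (auto simp: diff_def less_2_cases_iff)
  ultimately obtain \<xi> where between: "if t < y then t < \<xi> \<and> \<xi> < y else y < \<xi> \<and> \<xi> < t"
    and expansion: "g t = (\<Sum>m<2. diff m y / fact m * (t - y)^m) + diff 2 \<xi> / fact 2 * (t - y)^2"
    using Taylor[of 2 diff g a "max y t" y t] False assms(4,5) by auto
  have \<xi>: "\<xi> \<ge> a"
    using between assms(4,5) by (auto split: if_splits)
  have "\<bar>g t - g y - g' y * (t - y)\<bar> = \<bar>g'' \<xi> / 2 * (t - y)^2\<bar>"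
    using expansion by (simp add: diff_def numeral_2_eq_2)
  also have "\<dots> \<le> L / 2 * (t - y)^2"
    using assms(3)[OF \<xi>] by (simp add: abs_mult divide_right_mono mult_right_mono)
  finally show ?thesis .
qed simp

definition diff_quot :: "(real \<Rightarrow> real) \<Rightarrow> real \<Rightarrow> real \<Rightarrow> real" where
  "diff_quot G b y = (G (y + b) - G y) / b"

text \<open>For \<open>y \<ge> c\<close>, \<open>steklov c F b y\<close> is the mean of \<open>F\<close> over \<open>[y, y + b]\<close>; the base point \<open>c\<close>
  only fixes the primitive.\<close>

definition steklov :: "real \<Rightarrow> (real \<Rightarrow> real) \<Rightarrow> real \<Rightarrow> real \<Rightarrow> real" where
  "steklov c F b = diff_quot (\<lambda>z. integral {c..z} F) b"

lemma has_real_derivative_diff_quot: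
  assumes "\<And>u. u > c \<Longrightarrow> (G has_real_derivative G' u) (at u)" and "y > c" and "b > 0"
  shows "(diff_quot G b has_real_derivative diff_quot G' b y) (at y)"
proof -
  have "((\<lambda>y. G (y + b)) has_real_derivative G' (y + b)) (at y)"
    using assms DERIV_shift[of G "G' (y + b)" y b] by simp
  thus ?thesis
    unfolding diff_quot_def[abs_def] using assms(1,2) by (intro DERIV_cdivide DERIV_diff) auto
qed

lemma has_real_derivative_primitive:
  assumes "continuous_on {c..} F" and "u > c"
  shows "((\<lambda>z. integral {c..z} F) has_real_derivative F u) (at u)"
proof -
  have "((\<lambda>z. integral {c..z} F) has_real_derivative F u) (at u within {c..u + 1})"
    using assms by (intro integral_has_real_derivative continuous_on_subset[OF assms(1)]) auto
  moreover have "at u within {c..u + 1} = at u"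
    using assms by (intro at_within_Icc_at) auto
  ultimately show ?thesis by simp
qed

lemma has_real_derivative_steklov:
  assumes "continuous_on {c..} F" and "y > c" and "b > 0"
  shows "(steklov c F b has_real_derivative diff_quot F b y) (at y)"
  unfolding steklov_def
  using assms by (intro has_real_derivative_diff_quot has_real_derivative_primitive)

lemma has_integral_diff_quot:
  assumes "\<And>u. u \<ge> y \<Longrightarrow> (G has_real_derivative G' u) (at u)" and "m > 0" and "a > 0"
  shows "((\<lambda>t. G' (m * t + y)) has_integral a * diff_quot G (m * a) y) {0..a}"
proof -
  have "((\<lambda>t. G' (m * t + y)) has_integral G (m * a + y) / m - G (m * 0 + y) / m) {0..a}"
  proof (rule fundamental_theorem_of_calculus)
    fix t assume "t \<in> {0..a}"
    hence "((\<lambda>t. G (m * t + y)) has_real_derivative G' (m * t + y) * m) (at t)"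
      using assms by (intro DERIV_chain2[where f = G]) (auto intro!: derivative_eq_intros)
    hence "((\<lambda>t. G (m * t + y) / m) has_real_derivative G' (m * t + y) * m / m) (at t)"
      by (rule DERIV_cdivide)
    hence "((\<lambda>t. G (m * t + y) / m) has_real_derivative G' (m * t + y)) (at t)"
      using \<open>m > 0\<close> by simp
    thus "((\<lambda>t. G (m * t + y) / m) has_vector_derivative G' (m * t + y)) (at t within {0..a})"
      by (simp add: has_real_derivative_iff_has_vector_derivative[symmetric] has_field_derivative_at_within)
  qed (use assms in simp)
  moreover have "G (m * a + y) / m - G (m * 0 + y) / m = a * diff_quot G (m * a) y"
    using assms by (simp add: diff_quot_def add.commute field_simps)
  ultimately show ?thesis
    by simp
qed

lemma has_integral_average_bound:
  fixes f :: "real \<Rightarrow> real"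
  assumes "(f has_integral a * v) {0..a}" "a > 0" "\<And>t. t \<in> {0..a} \<Longrightarrow> \<bar>f t\<bar> \<le> W"
  shows "\<bar>v\<bar> \<le> W"
proof -
  have "W \<ge> 0"
    using assms(2) assms(3)[of 0] by auto
  moreover have "(f has_integral a * v) (cbox 0 a)"
    using assms(1) by simp
  ultimately have "norm (a * v) \<le> W * a"
    using has_integral_bound[of W f "a * v" 0 a] assms(2,3) by (simp add: content_real)
  thus ?thesis
    using assms(2) by (simp add: abs_mult)
qed

lemma has_integral_steklov:
  assumes "continuous_on {c..} F" and "y > c" and "m > 0" and "a > 0"
  shows "((\<lambda>t. F (m * t + y)) has_integral a * steklov c F (m * a) y) {0..a}"
  unfolding steklov_def
  using assms by (intro has_integral_diff_quot has_real_derivative_primitive) auto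

text \<open>The base points \<open>-2 < -1\<close> leave room for derivatives of \<open>steklov2 F b\<close> at every
  \<open>y \<ge> 0\<close>.\<close>

definition steklov2 :: "(real \<Rightarrow> real) \<Rightarrow> real \<Rightarrow> real \<Rightarrow> real" where
  "steklov2 F b = steklov (-1) (steklov (-2) F b) b"

lemma continuous_on_steklov:
  assumes "continuous_on {c..} F" and "b > 0" and "c < d"
  shows "continuous_on {d..} (steklov c F b)"
proof (intro continuous_at_imp_continuous_on ballI)
  fix y assume "y \<in> {d..}"
  hence "(steklov c F b has_real_derivative diff_quot F b y) (at y)"
    using assms by (intro has_real_derivative_steklov) auto
  thus "isCont (steklov c F b) y"
    by (rule DERIV_isCont)
qed

lemma has_real_derivative_steklov2:
  assumes "continuous_on UNIV F" and "y > -1" and "b > 0"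
  shows "(steklov2 F b has_real_derivative diff_quot (steklov (-2) F b) b y) (at y)"
proof -
  have "continuous_on {-1..} (steklov (-2) F b)"
    using assms by (intro continuous_on_steklov continuous_on_subset[OF assms(1)]) auto
  thus ?thesis
    unfolding steklov2_def using assms(2,3) by (rule has_real_derivative_steklov)
qed

lemma has_real_derivative_diff_quot_steklov:
  assumes "continuous_on UNIV F" and "y > -2" and "b > 0"
  shows "(diff_quot (steklov (-2) F b) b has_real_derivative diff_quot (diff_quot F b) b y) (at y)"
  using assms
  by (intro has_real_derivative_diff_quot[of "-2"] has_real_derivative_steklov
        continuous_on_subset[OF assms(1)]) auto

text \<open>\<open>F x - 2 steklov2 F a x + steklov2 F (2 a) x\<close> is the double average over \<open>s, t \<in> [0, a]\<close>
  of the second difference \<open>F x - 2 F (x + s + t) + F (x + 2 (s + t))\<close>.\<close>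

lemma steklov2_combination_approx:
  assumes cont: "continuous_on UNIV F" and a: "a > 0" and x: "x \<ge> 0"
    and second_diff: "\<And>e. 0 \<le> e \<Longrightarrow> e \<le> 2 * a \<Longrightarrow> \<bar>F (x + 2 * e) - 2 * F (x + e) + F x\<bar> \<le> W"
  shows "\<bar>F x - (2 * steklov2 F a x - steklov2 F (2 * a) x)\<bar> \<le> W"
proof -
  define S where "S = (\<lambda>b. steklov (-2) F b)"
  have inner: "\<bar>F x - 2 * S a (s + x) + S (2 * a) (2 * s + x)\<bar> \<le> W" if s: "s \<in> {0..a}" for s
  proof -
    have "((\<lambda>t. F x - 2 * F (1 * t + (s + x)) + F (2 * t + (2 * s + x))) has_integral
        a * F x - 2 * (a * S (1 * a) (s + x)) + a * S (2 * a) (2 * s + x)) {0..a}"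
      unfolding S_def using a s x has_integral_const_real[of "F x" 0 a]
      by (intro has_integral_add has_integral_diff has_integral_mult_right has_integral_steklov
            continuous_on_subset[OF cont]) auto
    hence "((\<lambda>t. F x - 2 * F (1 * t + (s + x)) + F (2 * t + (2 * s + x))) has_integral
        a * (F x - 2 * S a (s + x) + S (2 * a) (2 * s + x))) {0..a}"
      by (simp add: algebra_simps)
    thus ?thesis
    proof (rule has_integral_average_bound[OF _ a])
      fix t assume "t \<in> {0..a}"
      thus "\<bar>F x - 2 * F (1 * t + (s + x)) + F (2 * t + (2 * s + x))\<bar> \<le> W"
        using second_diff[of "s + t"] s by (simp add: algebra_simps)
    qed
  qed
  have "((\<lambda>s. F x - 2 * S (1 * a) (1 * s + x) + S (2 * a) (2 * s + x)) has_integral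
      a * F x - 2 * (a * steklov2 F (1 * a) x) + a * steklov2 F (2 * a) x) {0..a}"
    unfolding steklov2_def S_def using a x has_integral_const_real[of "F x" 0 a]
    by (intro has_integral_add has_integral_diff has_integral_mult_right has_integral_steklov
          continuous_on_steklov continuous_on_subset[OF cont]) auto
  hence "((\<lambda>s. F x - 2 * S a (s + x) + S (2 * a) (2 * s + x)) has_integral
      a * (F x - (2 * steklov2 F a x - steklov2 F (2 * a) x))) {0..a}"
    by (simp add: algebra_simps)
  thus ?thesis
    using inner by (rule has_integral_average_bound[OF _ a])
qed

lemma steklov_smoothing:
  fixes \<Phi> :: "real \<Rightarrow> real"
  assumes cont: "continuous_on {0..} \<Phi>" and h: "h > 0"
    and second_diff: "\<And>\<epsilon> y. 0 < \<epsilon> \<Longrightarrow> \<epsilon> \<le> h \<Longrightarrow> y \<ge> 0 \<Longrightarrow>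
      \<bar>\<Phi> (y + 2 * \<epsilon>) - 2 * \<Phi> (y + \<epsilon>) + \<Phi> y\<bar> \<le> W"
  obtains g g' where "\<And>y. y \<ge> 0 \<Longrightarrow> \<bar>\<Phi> y - g y\<bar> \<le> W"
    and "\<And>y t. y \<ge> 0 \<Longrightarrow> t \<ge> 0 \<Longrightarrow> \<bar>g t - g y - g' y * (t - y)\<bar> \<le> 9 * W / (2 * h^2) * (t - y)^2"
proof -
  define F where "F = (\<lambda>u. \<Phi> (max 0 u))"
  have F_cont: "continuous_on UNIV F"
    unfolding F_def
    by (rule continuous_on_compose2[OF cont continuous_on_max[OF continuous_on_const continuous_on_id]])
       auto
  have F_eq: "F u = \<Phi> u" if "u \<ge> 0" for u
    using that by (simp add: F_def)
  have W0: "W \<ge> 0"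
    using second_diff[of h 0] h by linarith
  define a where "a = h / 2"
  have a: "a > 0"
    using h by (simp add: a_def)
  have second_quot: "\<bar>diff_quot (diff_quot F b) b z\<bar> \<le> W / b^2" if "z \<ge> 0" "0 < b" "b \<le> h" for z b
  proof -
    have "diff_quot (diff_quot F b) b z = (\<Phi> (z + 2 * b) - 2 * \<Phi> (z + b) + \<Phi> z) / b^2"
      using that by (simp add: diff_quot_def F_eq add.assoc field_simps power2_eq_square)
    thus ?thesis
      using second_diff[of b z] that by (simp add: abs_divide divide_right_mono)
  qed
  define g where "g = (\<lambda>y. 2 * steklov2 F a y - steklov2 F (2 * a) y)"
  define g' where
    "g' = (\<lambda>y. 2 * diff_quot (steklov (-2) F a) a y - diff_quot (steklov (-2) F (2 * a)) (2 * a) y)"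
  define g'' where
    "g'' = (\<lambda>y. 2 * diff_quot (diff_quot F a) a y - diff_quot (diff_quot F (2 * a)) (2 * a) y)"
  show ?thesis
  proof
    fix x :: real assume x: "x \<ge> 0"
    have "\<bar>F x - g x\<bar> \<le> W"
      unfolding g_def
    proof (rule steklov2_combination_approx[OF F_cont a x])
      fix e :: real assume "0 \<le> e" "e \<le> 2 * a"
      thus "\<bar>F (x + 2 * e) - 2 * F (x + e) + F x\<bar> \<le> W"
        using second_diff[of e x] W0 x by (cases "e = 0") (auto simp: F_eq a_def)
    qed
    thus "\<bar>\<Phi> x - g x\<bar> \<le> W"
      using F_eq x by simp
  next
    fix y t :: real assume "y \<ge> 0" "t \<ge> 0"
    moreover have "(g has_real_derivative g' z) (at z)" if "z \<ge> 0" for z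
      unfolding g_def g'_def
      using that a by (intro DERIV_diff DERIV_cmult has_real_derivative_steklov2 F_cont) auto
    moreover have "(g' has_real_derivative g'' z) (at z)" if "z \<ge> 0" for z
      unfolding g'_def g''_def
      using that a by (intro DERIV_diff DERIV_cmult has_real_derivative_diff_quot_steklov F_cont) auto
    moreover have "\<bar>g'' z\<bar> \<le> 9 * W / h^2" if "z \<ge> 0" for z
    proof -
      have "\<bar>g'' z\<bar> \<le> 2 * (W / a^2) + W / (2 * a)^2"
        using second_quot[of z a] second_quot[of z "2 * a"] that a by (simp add: g''_def a_def)
      also have "\<dots> = 9 * W / h^2"
        by (simp add: a_def field_simps power2_eq_square)
      finally show ?thesis .
    qed
    ultimately have "\<bar>g t - g y - g' y * (t - y)\<bar> \<le> 9 * W / h^2 / 2 * (t - y)^2"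
      by (intro taylor_second_order_bound[where a = 0 and g'' = g''])
    thus "\<bar>g t - g y - g' y * (t - y)\<bar> \<le> 9 * W / (2 * h^2) * (t - y)^2"
      by (simp add: field_simps)
  qed
qed

lemma R_op_error_le_second_differences:
  assumes \<alpha>: "\<alpha> > -1" and \<beta>: "\<beta> > 0" and \<eta>: "\<eta> > 0" and x: "x \<ge> 0"
    and cont: "continuous_on {0..} \<Phi>" and h: "h > 0"
    and second_diff: "\<And>\<epsilon> y. 0 < \<epsilon> \<Longrightarrow> \<epsilon> \<le> h \<Longrightarrow> y \<ge> 0 \<Longrightarrow>
      \<bar>\<Phi> (y + 2 * \<epsilon>) - 2 * \<Phi> (y + \<epsilon>) + \<Phi> y\<bar> \<le> W"
  shows "\<bar>R_op \<alpha> \<beta> \<eta> \<Phi> x - \<Phi> x\<bar>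
    \<le> 2 * W + 9 * W / (2 * h^2) * (mu2 \<alpha> \<beta> \<eta> x + ((1 + \<alpha>) / \<eta>)^2)
       + \<bar>\<Phi> (x + (1 + \<alpha>) / \<eta>) - \<Phi> x\<bar>"
proof -
  obtain g g' where approx: "\<And>y. y \<ge> 0 \<Longrightarrow> \<bar>\<Phi> y - g y\<bar> \<le> W"
    and taylor: "\<And>y t. y \<ge> 0 \<Longrightarrow> t \<ge> 0 \<Longrightarrow>
      \<bar>g t - g y - g' y * (t - y)\<bar> \<le> 9 * W / (2 * h^2) * (t - y)^2"
    using steklov_smoothing[OF cont h second_diff] by blast
  define c where "c = (1 + \<alpha>) / \<eta>"
  define L where "L = 9 * W / (2 * h^2)"
  have c: "c > 0"
    using \<alpha> \<eta> by (simp add: c_def)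
  have affine: "\<bar>\<Phi> z - (g x + g' x * (z - x))\<bar> \<le> W + L * (z - x)^2" if "z \<ge> 0" for z
    using approx[OF that] taylor[OF x that] by (simp add: L_def abs_le_iff)
  have "\<bar>R_op \<alpha> \<beta> \<eta> \<Phi> x - (g x + g' x * c)\<bar> \<le> W + L * mu2 \<alpha> \<beta> \<eta> x"
    unfolding c_def by (rule R_op_affine_approx[OF \<alpha> \<beta> \<eta> x cont affine])
  moreover have "\<bar>\<Phi> (x + c) - (g x + g' x * c)\<bar> \<le> W + L * c^2"
    using affine[of "x + c"] x c by simp
  ultimately have "\<bar>R_op \<alpha> \<beta> \<eta> \<Phi> x - \<Phi> x\<bar>
      \<le> 2 * W + (L * mu2 \<alpha> \<beta> \<eta> x + L * c^2) + \<bar>\<Phi> (x + c) - \<Phi> x\<bar>"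
    by linarith
  thus ?thesis
    by (simp add: L_def c_def distrib_left)
qed

lemma second_difference_le_modsmooth2:
  assumes bounded: "bounded (\<Phi> ` {0..})" and "0 < \<epsilon>" "\<epsilon> \<le> t" "y \<ge> 0"
  shows "\<bar>\<Phi> (y + 2 * \<epsilon>) - 2 * \<Phi> (y + \<epsilon>) + \<Phi> y\<bar> \<le> modsmooth2 \<Phi> t"
  unfolding modsmooth2_def
proof (rule cSup_upper)
  obtain B where B: "\<And>y. y \<ge> 0 \<Longrightarrow> \<bar>\<Phi> y\<bar> \<le> B"
    using bounded unfolding bounded_iff by auto
  show "bdd_above {\<bar>\<Phi> (y + 2 * \<epsilon>) - 2 * \<Phi> (y + \<epsilon>) + \<Phi> y\<bar> | \<epsilon> y. 0 < \<epsilon> \<and> \<epsilon> \<le> t \<and> y \<ge> 0}"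
  proof (rule bdd_aboveI[of _ "4 * B"], clarify)
    fix \<epsilon>' y' :: real assume "0 < \<epsilon>'" "y' \<ge> 0"
    thus "\<bar>\<Phi> (y' + 2 * \<epsilon>') - 2 * \<Phi> (y' + \<epsilon>') + \<Phi> y'\<bar> \<le> 4 * B"
      using B[of y'] B[of "y' + \<epsilon>'"] B[of "y' + 2 * \<epsilon>'"] by (simp add: abs_le_iff)
  qed
qed (use assms in blast)

lemma abs_diff_le_modcont:
  assumes bounded: "bounded (\<Phi> ` {0..})" and "z \<ge> 0" "y \<ge> 0" "\<bar>z - y\<bar> \<le> t"
  shows "\<bar>\<Phi> z - \<Phi> y\<bar> \<le> modcont \<Phi> t"
  unfolding modcont_def
proof (rule cSup_upper)
  obtain B where B: "\<And>y. y \<ge> 0 \<Longrightarrow> \<bar>\<Phi> y\<bar> \<le> B"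
    using bounded unfolding bounded_iff by auto
  show "bdd_above {\<bar>\<Phi> z - \<Phi> y\<bar> | z y. z \<ge> 0 \<and> y \<ge> 0 \<and> \<bar>z - y\<bar> \<le> t}"
  proof (rule bdd_aboveI[of _ "2 * B"], clarify)
    fix z' y' :: real assume "z' \<ge> 0" "y' \<ge> 0"
    thus "\<bar>\<Phi> z' - \<Phi> y'\<bar> \<le> 2 * B"
      using B[of z'] B[of y'] by (simp add: abs_le_iff)
  qed
qed (use assms in blast)

lemma mu2_nonneg:
  assumes "\<alpha> > -1" "\<beta> > 0" "\<eta> > 0" "x \<ge> 0"
  shows "mu2 \<alpha> \<beta> \<eta> x \<ge> 0"
proof -
  have "\<alpha>^2 * \<beta> + 4 * \<alpha> * \<beta> + 3 * \<beta> + \<alpha> + 1 = (\<alpha> + 1) * (\<beta> * (\<alpha> + 3) + 1)"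
    by (simp add: algebra_simps power2_eq_square)
  also have "\<dots> \<ge> 0"
    using assms by (intro mult_nonneg_nonneg) auto
  finally have "(\<alpha>^2 * \<beta> + 4 * \<alpha> * \<beta> + 3 * \<beta> + \<alpha> + 1) / (\<beta> * \<eta>^2) \<ge> 0"
    using assms by simp
  thus ?thesis
    unfolding mu2_def using assms by (intro add_nonneg_nonneg) auto
qed

theorem mainTheorem5:
  shows "\<exists>M::real. M > 0 \<and>
    (\<forall>\<alpha> \<beta> \<eta> (\<Phi>::real \<Rightarrow> real) x.
       \<alpha> > -1 \<longrightarrow> \<beta> > 0 \<longrightarrow> \<eta> > 0 \<longrightarrow>
       continuous_on {0..} \<Phi> \<longrightarrow> bounded (\<Phi> ` {0..}) \<longrightarrow> x \<ge> 0 \<longrightarrow>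
       \<bar>R_op \<alpha> \<beta> \<eta> \<Phi> x - \<Phi> x\<bar>
         \<le> M * modsmooth2 \<Phi> (sqrt ((mu2 \<alpha> \<beta> \<eta> x + ((1 + \<alpha>) / \<eta>)^2) / 2))
           + modcont \<Phi> ((1 + \<alpha>) / \<eta>))"
proof (intro exI[of _ 11] conjI allI impI)
  fix \<alpha> \<beta> \<eta> x :: real and \<Phi> :: "real \<Rightarrow> real"
  assume \<alpha>: "\<alpha> > -1" and \<beta>: "\<beta> > 0" and \<eta>: "\<eta> > 0" and cont: "continuous_on {0..} \<Phi>"
    and bounded: "bounded (\<Phi> ` {0..})" and x: "x \<ge> 0"
  define c where "c = (1 + \<alpha>) / \<eta>"
  define \<delta> where "\<delta> = mu2 \<alpha> \<beta> \<eta> x + c^2"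
  define h where "h = sqrt (\<delta> / 2)"
  have c: "c > 0"
    using \<alpha> \<eta> by (simp add: c_def)
  hence "\<delta> > 0"
    using mu2_nonneg[OF \<alpha> \<beta> \<eta> x] by (simp add: \<delta>_def add_nonneg_pos)
  hence h: "h > 0" and h2: "2 * h^2 = \<delta>"
    by (simp_all add: h_def)
  have "\<bar>R_op \<alpha> \<beta> \<eta> \<Phi> x - \<Phi> x\<bar>
      \<le> 2 * modsmooth2 \<Phi> h + 9 * modsmooth2 \<Phi> h / (2 * h^2) * \<delta> + \<bar>\<Phi> (x + c) - \<Phi> x\<bar>"
    unfolding \<delta>_def c_def
    by (rule R_op_error_le_second_differences[OF \<alpha> \<beta> \<eta> x cont h
          second_difference_le_modsmooth2[OF bounded]])
  also have "\<bar>\<Phi> (x + c) - \<Phi> x\<bar> \<le> modcont \<Phi> c"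
    using x c by (intro abs_diff_le_modcont[OF bounded]) auto
  finally show "\<bar>R_op \<alpha> \<beta> \<eta> \<Phi> x - \<Phi> x\<bar>
      \<le> 11 * modsmooth2 \<Phi> (sqrt ((mu2 \<alpha> \<beta> \<eta> x + ((1 + \<alpha>) / \<eta>)^2) / 2))
        + modcont \<Phi> ((1 + \<alpha>) / \<eta>)"
    using \<open>\<delta> > 0\<close> unfolding h2 by (simp add: h_def \<delta>_def c_def)
qed simp

end
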